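(* Let $n\in\mathbb N$ and let $\nu>-1$ be a real number with $\nu\ne0$. Then all zeros of the polynomial $p(z)=F(-n,\nu+2;-n+1-\nu;z)$ lie in the open unit disk $\mathbb D$.
   Context: The hypergeometric function is $F(a,b;c;z)=\sum_{k\ge0}\frac{(a)_k(b)_k}{(c)_k}\frac{z^k}{k!}$, where $(x)_0=1$ and $(x)_k=x(x+1)\cdots(x+k-1)$; when $a=-n$ with $n\in\mathbb N$ the series terminates at $k=n$ and defines a polynomial for all $z\in\mathbb C$ whenever $c\notin\{0,-1,\dots,1-n\}$. $\mathbb D=\{|z|<1\}$. *)

theory Defs
  imports "HOL-Analysis.Analysis"
begin

text \<open>Terminating Gauss hypergeometric function F(-n,b;c;z): the series
  sum_k (-n)_k (b)_k / (c)_k z^k / k! terminates at k = n since (-n)_k = 0 for k > n.\<close>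
definition hyp2F1_term :: "nat \<Rightarrow> complex \<Rightarrow> complex \<Rightarrow> complex \<Rightarrow> complex" where
  "hyp2F1_term n b c z =
     (\<Sum>k\<le>n. pochhammer (- of_nat n) k * pochhammer b k / pochhammer c k * z ^ k / fact k)"

end

theory Submission
  imports Defs
begin

text \<open>Up to the nonzero factor \<open>n! / (\<nu>)\<^sub>n\<close> the polynomial is
  \<open>S\<^sub>n(z) = \<Sum>\<^sub>k (\<nu>+2)\<^sub>k/k! \<cdot> (\<nu>)\<^sub>n\<^sub>-\<^sub>k/(n-k)! \<cdot> z\<^sup>k\<close>, the coefficient of \<open>w\<^sup>n\<close> in
  \<open>(1 - z w)\<^sup>-\<^sup>(\<^sup>\<nu>\<^sup>+\<^sup>2\<^sup>) (1 - w)\<^sup>-\<^sup>\<nu>\<close>; hence it satisfies a three-term recurrence in \<open>n\<close>.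
  For \<open>|z| \<ge> 1\<close> the recurrence keeps the quotient \<open>x\<^sub>n = S\<^sub>n / (z S\<^sub>n\<^sub>-\<^sub>1)\<close> inside the disk
  \<open>|n x - (n+\<nu>+1)| \<le> |\<nu>|\<close>, which does not contain \<open>0\<close> because \<open>n+\<nu>+1 > |\<nu>|\<close>.\<close>

definition rising_binom :: "real \<Rightarrow> nat \<Rightarrow> real" where
  "rising_binom a k = pochhammer a k / fact k"

definition conv_coeff :: "real \<Rightarrow> nat \<Rightarrow> nat \<Rightarrow> real" where
  "conv_coeff v n k = (if k \<le> n then rising_binom (v + 2) k * rising_binom v (n - k) else 0)"

definition conv_poly :: "real \<Rightarrow> nat \<Rightarrow> complex \<Rightarrow> complex" where
  "conv_poly v n z = (\<Sum>k\<le>n. of_real (conv_coeff v n k) * z ^ k)"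

lemma rising_binom_0 [simp]: "rising_binom a 0 = 1"
  by (simp add: rising_binom_def)

lemma rising_binom_Suc: "rising_binom a (Suc k) * (real k + 1) = rising_binom a k * (a + real k)"
  by (simp add: rising_binom_def pochhammer_rec' divide_simps)

lemma conv_poly_0: "conv_poly v 0 z = 1"
  by (simp add: conv_poly_def conv_coeff_def)

lemma conv_poly_1: "conv_poly v 1 z = of_real v + of_real (v + 2) * z"
  by (simp add: conv_poly_def conv_coeff_def rising_binom_def)

lemma conv_coeff_interior_identity:
  fixes i j v a b a' b' :: real
  assumes "i \<ge> 0" "j \<ge> 0"
    and a': "a' * (j + 1) = a * (v + 2 + j)" and b': "b' * (i + 1) = b * (v + i)"
  shows "(i + j + 2) * (a' * b') =
     (i + j + v + 3) * (a * b') + (i + j + v + 1) * (a' * b) - (i + j + 2 * v + 2) * (a * b)"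
proof -
  have "(j + 1) * (i + 1) * ((i + j + 2) * (a' * b') -
     ((i + j + v + 3) * (a * b') + (i + j + v + 1) * (a' * b) - (i + j + 2 * v + 2) * (a * b))) = 0"
    using a' b' by algebra
  moreover have "(j + 1) * (i + 1) \<noteq> 0" using assms by auto
  ultimately show ?thesis by simp
qed

lemma conv_coeff_recurrence:
  fixes v :: real
  defines "shifted m k \<equiv> if k = 0 then 0 else conv_coeff v m (k - 1)"
  assumes "k \<le> n + 2"
  shows "real (n + 2) * conv_coeff v (n + 2) k =
     (real n + v + 3) * shifted (n + 1) k + (real n + v + 1) * conv_coeff v (n + 1) k
     - (real n + 2 * v + 2) * shifted n k"
proof -
  consider "k = 0" | "k = n + 2" | j where "k = Suc j" "j \<le> n"
    using assms(2) by (cases k) (auto simp: le_Suc_eq)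
  then show ?thesis
  proof cases
    case 1
    then show ?thesis
      using rising_binom_Suc[of v "n + 1"] by (simp add: shifted_def conv_coeff_def field_simps)
  next
    case 2
    then show ?thesis
      using rising_binom_Suc[of "v + 2" "n + 1"] by (simp add: shifted_def conv_coeff_def field_simps)
  next
    case 3
    then obtain i where i: "n = j + i" by (metis le_add_diff_inverse)
    have "n + 2 - Suc j = Suc i" "Suc n - j = Suc i" "n + 1 - Suc j = i" "n - j = i"
      using i by simp_all
    then show ?thesis
      using 3 i conv_coeff_interior_identity[of "real i" "real j",
          OF _ _ rising_binom_Suc[of "v + 2" j] rising_binom_Suc[of v i]]
      by (simp add: shifted_def conv_coeff_def algebra_simps)
  qed
qed

lemma conv_poly_upto:
  assumes "n \<le> N"
  shows "conv_poly v n z = (\<Sum>k\<le>N. of_real (conv_coeff v n k) * z ^ k)"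
  unfolding conv_poly_def using assms
  by (intro sum.mono_neutral_left) (auto simp: conv_coeff_def)

lemma z_times_conv_poly:
  assumes "n + 1 \<le> N"
  shows "z * conv_poly v n z =
    (\<Sum>k\<le>N. of_real (if k = 0 then 0 else conv_coeff v n (k - 1)) * z ^ k)"
proof -
  have "(\<Sum>k\<le>N. of_real (if k = 0 then 0 else conv_coeff v n (k - 1)) * z ^ k) =
        (\<Sum>k\<le>Suc n. of_real (if k = 0 then 0 else conv_coeff v n (k - 1)) * z ^ k)"
    using assms by (intro sum.mono_neutral_right) (auto simp: conv_coeff_def)
  also have "\<dots> = (\<Sum>k\<le>n. of_real (conv_coeff v n k) * z ^ Suc k)"
    by (subst sum.atMost_Suc_shift) simp
  also have "\<dots> = z * conv_poly v n z"
    by (simp add: conv_poly_def sum_distrib_left algebra_simps)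
  finally show ?thesis by simp
qed

lemma conv_poly_recurrence:
  "of_nat (n + 2) * conv_poly v (n + 2) z =
     (of_real (real n + v + 3) * z + of_real (real n + v + 1)) * conv_poly v (n + 1) z
     - of_real (real n + 2 * v + 2) * (z * conv_poly v n z)"
proof -
  define shifted where "shifted m k = (if k = 0 then 0 else conv_coeff v m (k - 1))" for m k
  let ?N = "n + 2"
  have "(of_real (real n + v + 3) * z + of_real (real n + v + 1)) * conv_poly v (n + 1) z
     - of_real (real n + 2 * v + 2) * (z * conv_poly v n z)
     = of_real (real n + v + 3) * (z * conv_poly v (n + 1) z)
       + of_real (real n + v + 1) * conv_poly v (n + 1) z
       - of_real (real n + 2 * v + 2) * (z * conv_poly v n z)"
    by (simp add: algebra_simps)
  also have "\<dots> = of_real (real n + v + 3) * (\<Sum>k\<le>?N. of_real (shifted (n + 1) k) * z ^ k)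
       + of_real (real n + v + 1) * (\<Sum>k\<le>?N. of_real (conv_coeff v (n + 1) k) * z ^ k)
       - of_real (real n + 2 * v + 2) * (\<Sum>k\<le>?N. of_real (shifted n k) * z ^ k)"
    unfolding shifted_def
    by (subst (1 2) z_times_conv_poly[of _ ?N], simp, simp, subst conv_poly_upto[of _ ?N], simp_all)
  also have "\<dots> = (\<Sum>k\<le>?N. of_real ((real n + v + 3) * shifted (n + 1) k
       + (real n + v + 1) * conv_coeff v (n + 1) k - (real n + 2 * v + 2) * shifted n k) * z ^ k)"
    by (simp add: sum_distrib_left sum.distrib sum_subtractf algebra_simps)
  also have "\<dots> = (\<Sum>k\<le>?N. of_real (real ?N * conv_coeff v ?N k) * z ^ k)"
    using conv_coeff_recurrence[of _ n v] by (intro sum.cong) (simp_all add: shifted_def)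
  also have "\<dots> = of_nat ?N * conv_poly v ?N z"
    by (simp add: conv_poly_def sum_distrib_left algebra_simps)
  finally show ?thesis by simp
qed

lemma disk_step_real:
  fixes n v p q :: real
  assumes n: "n \<ge> 1" and v: "v > -1"
    and disk: "(n * p - (n + v + 1))\<^sup>2 + (n * q)\<^sup>2 \<le> v\<^sup>2"
  shows "((n + v) * p - (n + 2 * v + 1))\<^sup>2 + ((n + v) * q)\<^sup>2 \<le> v\<^sup>2 * (p\<^sup>2 + q\<^sup>2)"
proof -
  define y where "y = n * p - (n + v + 1)"
  define s where "s = sqrt (y\<^sup>2 + (n * q)\<^sup>2)"
  have s0: "s \<ge> 0" and s2: "s\<^sup>2 = y\<^sup>2 + (n * q)\<^sup>2"
    by (simp_all add: s_def)
  have s_le: "s \<le> \<bar>v\<bar>"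
    using disk unfolding s_def y_def by (metis real_sqrt_abs real_sqrt_le_mono)
  have y_le: "\<bar>y\<bar> \<le> s"
    unfolding s_def by (rule real_le_rsqrt) (simp add: power2_abs)
  have vy: "v * y \<le> \<bar>v\<bar> * s"
    using abs_ge_self[of "v * y"] mult_left_mono[OF y_le abs_ge_zero[of v]] by (simp add: abs_mult)
  have "0 \<le> 2 * \<bar>v\<bar> + (n + 2 * v) * (\<bar>v\<bar> + s)"
  proof (cases "n + 2 * v \<ge> 0")
    case False
    have "0 \<le> (n + 2 * v + 1) * (\<bar>v\<bar> + s)" using n v s0 by simp
    then show ?thesis using s_le by (simp add: algebra_simps)
  qed (use s0 in simp)
  txt \<open>Multiplied by \<open>n\<close>, the deficit is a quadratic in \<open>s\<close> vanishing at \<open>s = |v|\<close>.\<close>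
  then have "0 \<le> (\<bar>v\<bar> - s) * (2 * \<bar>v\<bar> + (n + 2 * v) * (\<bar>v\<bar> + s))"
    using s_le by simp
  also have "\<dots> = v\<^sup>2 * (n + 2 * v + 2) - 2 * \<bar>v\<bar> * s - (n + 2 * v) * s\<^sup>2"
    by (simp add: algebra_simps power2_eq_square abs_mult_self_eq)
  also have "\<dots> \<le> v\<^sup>2 * (n + 2 * v + 2) - 2 * v * y - (n + 2 * v) * s\<^sup>2"
    using vy by simp
  also have "\<dots> = n * (v\<^sup>2 * (p\<^sup>2 + q\<^sup>2)
      - (((n + v) * p - (n + 2 * v + 1))\<^sup>2 + ((n + v) * q)\<^sup>2))"
    unfolding s2 y_def by (simp add: power2_eq_square algebra_simps)
  finally show ?thesis
    using n by (simp add: zero_le_mult_iff)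
qed

lemma disk_step:
  fixes x :: complex and n :: nat
  assumes "n \<ge> 1" and "v > -1"
    and "cmod (of_nat n * x - of_real (real n + v + 1)) \<le> \<bar>v\<bar>"
  shows "cmod (of_real (real n + v) * x - of_real (real n + 2 * v + 1)) \<le> \<bar>v\<bar> * cmod x"
proof -
  have "(cmod (of_nat n * x - of_real (real n + v + 1)))\<^sup>2 \<le> \<bar>v\<bar>\<^sup>2"
    by (rule power_mono[OF assms(3) norm_ge_zero])
  then have "(real n * Re x - (real n + v + 1))\<^sup>2 + (real n * Im x)\<^sup>2 \<le> v\<^sup>2"
    by (simp add: cmod_power2)
  from disk_step_real[OF _ assms(2) this] assms(1)
  have "(cmod (of_real (real n + v) * x - of_real (real n + 2 * v + 1)))\<^sup>2 \<le> (\<bar>v\<bar> * cmod x)\<^sup>2"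
    by (simp add: cmod_power2 power_mult_distrib)
  then show ?thesis by (rule power2_le_imp_le) simp
qed

lemma nonzero_if_near_multiple:
  fixes a b z :: complex
  assumes v: "v > -1" and z: "cmod z \<ge> 1" and a: "a \<noteq> 0"
    and near: "cmod (of_nat (Suc n) * b - of_real (real (Suc n) + v + 1) * z * a)
      \<le> \<bar>v\<bar> * cmod z * cmod a"
  shows "b \<noteq> 0"
proof
  have "cmod (of_real (real (Suc n) + v + 1) * z * a) = \<bar>real (Suc n) + v + 1\<bar> * (cmod z * cmod a)"
    by (simp only: norm_mult norm_of_real mult.assoc)
  moreover assume "b = 0"
  ultimately have "\<bar>real (Suc n) + v + 1\<bar> * (cmod z * cmod a) \<le> \<bar>v\<bar> * (cmod z * cmod a)"
    using near by simp
  moreover have "cmod z * cmod a > 0" using z a by (intro mult_pos_pos) auto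
  ultimately have "\<bar>real (Suc n) + v + 1\<bar> \<le> \<bar>v\<bar>" by (rule mult_right_le_imp_le)
  then show False using v by (simp split: abs_split)
qed

lemma conv_poly_near_multiple:
  assumes v: "v > -1" and z: "cmod z \<ge> 1"
  shows "conv_poly v n z \<noteq> 0 \<and>
    cmod (of_nat (Suc n) * conv_poly v (Suc n) z - of_real (real (Suc n) + v + 1) * z * conv_poly v n z)
      \<le> \<bar>v\<bar> * cmod z * cmod (conv_poly v n z)"
proof (induction n)
  case 0
  have "cmod (of_real v :: complex) \<le> \<bar>v\<bar> * cmod z"
    using z by (simp add: mult_le_cancel_left1)
  then show ?case
    using conv_poly_1[of v z] by (simp add: conv_poly_0 algebra_simps)
next
  case (Suc m)
  let ?a = "conv_poly v m z" and ?b = "conv_poly v (m + 1) z" and ?c = "conv_poly v (m + 2) z"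
  define n where "n = m + 1"
  have a: "?a \<noteq> 0"
    and near: "cmod (of_nat n * ?b - of_real (real n + v + 1) * z * ?a) \<le> \<bar>v\<bar> * cmod z * cmod ?a"
    using Suc.IH by (simp_all add: n_def)
  have b: "?b \<noteq> 0"
    using nonzero_if_near_multiple[OF v z a] near by (simp add: n_def)
  have za: "z * ?a \<noteq> 0" using z a by auto
  define x where "x = ?b / (z * ?a)"
  have "of_nat n * ?b - of_real (real n + v + 1) * z * ?a
      = (of_nat n * x - of_real (real n + v + 1)) * (z * ?a)"
    using za by (simp add: x_def field_simps)
  with near za have "cmod (of_nat n * x - of_real (real n + v + 1)) \<le> \<bar>v\<bar>"
    by (simp add: norm_mult mult.assoc)
  from disk_step[OF _ v this]
  have step: "cmod (of_real (real n + v) * x - of_real (real n + 2 * v + 1)) \<le> \<bar>v\<bar> * cmod x"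
    by (simp add: n_def)
  have "of_nat (Suc n) * ?c - of_real (real (Suc n) + v + 1) * z * ?b
      = of_real (real n + v) * ?b - of_real (real n + 2 * v + 1) * (z * ?a)"
    using conv_poly_recurrence[of m v z] by (simp add: n_def algebra_simps)
  also have "\<dots> = (of_real (real n + v) * x - of_real (real n + 2 * v + 1)) * (z * ?a)"
    using za by (simp add: x_def field_simps)
  finally have "cmod (of_nat (Suc n) * ?c - of_real (real (Suc n) + v + 1) * z * ?b)
      \<le> \<bar>v\<bar> * cmod x * cmod (z * ?a)"
    using step by (simp add: norm_mult mult_right_mono)
  also have "\<dots> = \<bar>v\<bar> * cmod ?b"
    using za by (simp add: x_def norm_divide)
  also have "\<dots> \<le> \<bar>v\<bar> * cmod z * cmod ?b"
    using z by (simp add: mult_le_cancel_left1 mult_right_mono)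
  finally show ?case
    using b by (simp add: n_def)
qed

lemma conv_poly_nonzero:
  assumes "v > -1" and "cmod z \<ge> 1"
  shows "conv_poly v n z \<noteq> 0"
  using conv_poly_near_multiple[OF assms] by blast

lemma pochhammer_nonzero_gt_minus_one:
  assumes "v > -1" "v \<noteq> 0"
  shows "pochhammer v m \<noteq> (0::real)"
proof
  assume "pochhammer v m = 0"
  then obtain j where "v = - of_nat j" by (auto simp: pochhammer_eq_0_iff)
  with assms show False by (cases j) auto
qed

lemma hyp2F1_coeff_eq_conv_coeff:
  assumes v: "v > -1" "v \<noteq> 0" and k: "k \<le> n"
  shows "pochhammer (- real n) k * pochhammer (v + 2) k / pochhammer (1 - real n - v) k / fact k
     = fact n / pochhammer v n * conv_coeff v n k"
proof -
  have minus_n: "pochhammer (- real n) k = (-1) ^ k * pochhammer (real (n - k) + 1) k"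
    using pochhammer_minus[of "real n" k] k by (simp add: of_nat_diff)
  have fact_n: "fact n = fact (n - k) * pochhammer (real (n - k) + 1) k"
    using pochhammer_product'[of "1::real" "n - k" k] k by (simp add: pochhammer_fact add.commute)
  have lower: "pochhammer (1 - real n - v) k = (-1) ^ k * pochhammer (v + real (n - k)) k"
    using pochhammer_minus[of "real n + v - 1" k] k by (simp add: of_nat_diff algebra_simps)
  have split_n: "pochhammer v n = pochhammer v (n - k) * pochhammer (v + real (n - k)) k"
    using pochhammer_product'[of v "n - k" k] k by simp
  have "pochhammer v (n - k) \<noteq> 0" "pochhammer v n \<noteq> 0"
    using pochhammer_nonzero_gt_minus_one[OF v] by auto
  then show ?thesis
    unfolding minus_n lower conv_coeff_def rising_binom_def using k split_n
    by (simp add: fact_n field_simps)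
qed

lemma hyp2F1_term_eq_conv_poly:
  assumes "v > -1" "v \<noteq> 0"
  shows "hyp2F1_term n (complex_of_real (v + 2)) (complex_of_real (1 - real n - v)) z
     = of_real (fact n / pochhammer v n) * conv_poly v n z"
  unfolding hyp2F1_term_def conv_poly_def sum_distrib_left
proof (rule sum.cong[OF refl])
  fix k assume "k \<in> {..n}"
  then have k: "k \<le> n" by simp
  have "(- of_nat n :: complex) = of_real (- real n)" by simp
  then have "pochhammer (- of_nat n) k * pochhammer (complex_of_real (v + 2)) k /
        pochhammer (complex_of_real (1 - real n - v)) k * z ^ k / fact k
     = of_real (pochhammer (- real n) k * pochhammer (v + 2) k / pochhammer (1 - real n - v) k
        / fact k) * z ^ k"
    by (simp only: pochhammer_of_real) (simp add: field_simps)
  also have "\<dots> = of_real (fact n / pochhammer v n) * (of_real (conv_coeff v n k) * z ^ k)"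
    by (simp only: hyp2F1_coeff_eq_conv_coeff[OF assms k]) simp
  finally show "pochhammer (- of_nat n) k * pochhammer (complex_of_real (v + 2)) k /
        pochhammer (complex_of_real (1 - real n - v)) k * z ^ k / fact k
     = of_real (fact n / pochhammer v n) * (of_real (conv_coeff v n k) * z ^ k)" .
qed

theorem lemma4:
  fixes n :: nat and \<nu> :: real and z :: complex
  assumes "\<nu> > -1" and "\<nu> \<noteq> 0"
    and "hyp2F1_term n (complex_of_real (\<nu> + 2)) (complex_of_real (1 - real n - \<nu>)) z = 0"
  shows "norm z < 1"
proof (rule ccontr)
  assume "\<not> norm z < 1"
  then have "conv_poly \<nu> n z \<noteq> 0"
    using conv_poly_nonzero[OF assms(1)] by simp
  moreover have "(of_real (fact n / pochhammer \<nu> n) :: complex) \<noteq> 0"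
    using pochhammer_nonzero_gt_minus_one[OF assms(1,2)] by simp
  ultimately show False
    using assms(3) hyp2F1_term_eq_conv_poly[OF assms(1,2), of n z] by simp
qed

end
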